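(* Let $K$ be a finite simplicial complex, $\mathcal V$ a multivector field on $K$, $N\subseteq K$ closed, and let $(P,E)$ be an index pair in $N$ under $\mathcal V$. Let $\mathcal A$ be a set of multivectors of $\mathcal V$ such that $\langle\mathcal A\rangle\subseteq N$, $\langle\mathcal A\rangle\cap E=\emptyset$ and $\mathrm{mo}(\langle\mathcal A\rangle)\subseteq P$. Then $(P\cup\langle\mathcal A\rangle,E)$ is an index pair in $N$ under $\mathcal V$ (namely, for $\mathrm{inv}_{\mathcal V}((P\cup\langle\mathcal A\rangle)\setminus E)$).
   Context: $\sigma\le\tau$ means $\sigma$ is a face of $\tau$; $\mathrm{cl}(A)$ is the set of faces of simplices of $A$; $A$ is closed if $A=\mathrm{cl}(A)$; $\mathrm{mo}(A)=\mathrm{cl}(A)\setminus A$. A multivector is a convex subset of $K$ w.r.t. $\le$; a multivector field $\mathcal V$ is a partition of $K$ into multivectors; $[\sigma]_{\mathcal V}$ is the multivector containing $\sigma$. For a set $\mathcal A$ of multivectors, $\langle\mathcal A\rangle=\bigcup_{A\in\mathcal A}A$. $F_{\mathcal V}(\sigma)=[\sigma]_{\mathcal V}\cup\mathrm{cl}(\sigma)$ and $F_{\mathcal V}(A)=\bigcup_{\sigma\in A}F_{\mathcal V}(\sigma)$. A path is a finite sequence with $\sigma_j\in F_{\mathcal V}(\sigma_{j-1})$; a solution is a bi-infinite one. A multivector $V$ is critical if $H_k(\mathrm{cl}(V),\mathrm{mo}(V))\ne0$ for some $k$, regular otherwise. A solution $\rho$ is essential if whenever $[\rho(i)]_{\mathcal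 V}$ is regular there are $i^-<i<i^+$ with $[\rho(i^\pm)]_{\mathcal V}\ne[\rho(i)]_{\mathcal V}$. $\mathrm{inv}_{\mathcal V}(A)$ is the set of simplices of $A$ lying on an essential solution with image in $A$. An index pair in $N$ for an invariant set $S$ (under $\mathcal V$) is a pair of closed sets $E\subseteq P\subseteq N$ with: (1) $F_{\mathcal V}(E)\cap N\subseteq E$; (2) $F_{\mathcal V}(P)\cap N\subseteq P$; (3) $F_{\mathcal V}(P\setminus E)\subseteq N$; (4) $S=\mathrm{inv}_{\mathcal V}(P\setminus E)$. "Index pair in $N$ under $\mathcal V$" means an index pair in $N$ for $\mathrm{inv}_{\mathcal V}(P\setminus E)$. *)

theory Defs
  imports Main
begin

text \<open>Simplices are finite nonempty sets of vertices; vertices carry a linear order,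
  used to orient simplices for simplicial homology (integer coefficients).\<close>

definition simplicial_complex :: "'v set set \<Rightarrow> bool" where
  "simplicial_complex K \<longleftrightarrow>
     (\<forall>\<sigma>\<in>K. finite \<sigma> \<and> \<sigma> \<noteq> {}) \<and>
     (\<forall>\<sigma>\<in>K. \<forall>\<tau>. \<tau> \<subseteq> \<sigma> \<and> \<tau> \<noteq> {} \<longrightarrow> \<tau> \<in> K)"

definition finite_simplicial_complex :: "'v set set \<Rightarrow> bool" where
  "finite_simplicial_complex K \<longleftrightarrow> simplicial_complex K \<and> finite K"

definition cl :: "'v set set \<Rightarrow> 'v set set" where
  "cl A = {\<sigma>. \<sigma> \<noteq> {} \<and> (\<exists>\<tau>\<in>A. \<sigma> \<subseteq> \<tau>)}"

definition is_closed :: "'v set set \<Rightarrow> bool" where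
  "is_closed A \<longleftrightarrow> A = cl A"

definition mo :: "'v set set \<Rightarrow> 'v set set" where
  "mo A = cl A - A"

definition convex :: "'v set set \<Rightarrow> 'v set set \<Rightarrow> bool" where
  "convex K A \<longleftrightarrow> A \<subseteq> K \<and>
     (\<forall>\<sigma>\<in>A. \<forall>\<tau>\<in>A. \<forall>\<rho>\<in>K. \<sigma> \<subseteq> \<rho> \<and> \<rho> \<subseteq> \<tau> \<longrightarrow> \<rho> \<in> A)"

definition multivector_field :: "'v set set \<Rightarrow> 'v set set set \<Rightarrow> bool" where
  "multivector_field K \<V> \<longleftrightarrow>
     (\<forall>A\<in>\<V>. A \<noteq> {} \<and> convex K A) \<and>
     (\<forall>A\<in>\<V>. \<forall>B\<in>\<V>. A \<noteq> B \<longrightarrow> A \<inter> B = {}) \<and>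
     \<Union>\<V> = K"

definition mv :: "'v set set set \<Rightarrow> 'v set \<Rightarrow> 'v set set" where
  "mv \<V> \<sigma> = (THE A. A \<in> \<V> \<and> \<sigma> \<in> A)"

definition union_mv :: "'v set set set \<Rightarrow> 'v set set" where
  "union_mv \<A> = \<Union>\<A>"

definition F :: "'v set set set \<Rightarrow> 'v set \<Rightarrow> 'v set set" where
  "F \<V> \<sigma> = mv \<V> \<sigma> \<union> cl {\<sigma>}"

definition F_set :: "'v set set set \<Rightarrow> 'v set set \<Rightarrow> 'v set set" where
  "F_set \<V> A = (\<Union>\<sigma>\<in>A. F \<V> \<sigma>)"

text \<open>Relative simplicial homology H_k(cl V, mo V) with integer coefficients.
  The relative chain group is identified with chains supported on V = cl V - mo V.\<close>

definition chain :: "'v set set \<Rightarrow> nat \<Rightarrow> ('v set \<Rightarrow> int) \<Rightarrow> bool" where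
  "chain V k c \<longleftrightarrow> (\<forall>\<sigma>. c \<sigma> \<noteq> 0 \<longrightarrow> \<sigma> \<in> V \<and> card \<sigma> = Suc k)"

definition face_sign :: "'v::linorder set \<Rightarrow> 'v \<Rightarrow> int" where
  "face_sign \<sigma> x = (-1) ^ card {v\<in>\<sigma>. v < x}"

definition rel_boundary :: "'v::linorder set set \<Rightarrow> ('v set \<Rightarrow> int) \<Rightarrow> ('v set \<Rightarrow> int)" where
  "rel_boundary V c = (\<lambda>\<tau>. if \<tau> \<in> V then
      (\<Sum>x\<in>{x. insert x \<tau> \<in> V \<and> x \<notin> \<tau>}. face_sign (insert x \<tau>) x * c (insert x \<tau>))
      else 0)"

definition homology_nonzero :: "'v::linorder set set \<Rightarrow> nat \<Rightarrow> bool" where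
  "homology_nonzero V k \<longleftrightarrow>
     (\<exists>z. chain V k z \<and> rel_boundary V z = (\<lambda>_. 0) \<and>
          \<not> (\<exists>b. chain V (Suc k) b \<and> rel_boundary V b = z))"

definition critical :: "'v::linorder set set \<Rightarrow> bool" where
  "critical V \<longleftrightarrow> (\<exists>k. homology_nonzero V k)"

definition regular :: "'v::linorder set set \<Rightarrow> bool" where
  "regular V \<longleftrightarrow> \<not> critical V"

definition solution :: "'v set set set \<Rightarrow> (int \<Rightarrow> 'v set) \<Rightarrow> bool" where
  "solution \<V> \<rho> \<longleftrightarrow> (\<forall>i. \<rho> (i + 1) \<in> F \<V> (\<rho> i))"

definition essential :: "'v::linorder set set set \<Rightarrow> (int \<Rightarrow> 'v set) \<Rightarrow> bool" where
  "essential \<V> \<rho> \<longleftrightarrow> solution \<V> \<rho> \<and>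
     (\<forall>i. regular (mv \<V> (\<rho> i)) \<longrightarrow>
        (\<exists>im ip. im < i \<and> i < ip \<and> mv \<V> (\<rho> im) \<noteq> mv \<V> (\<rho> i)
                 \<and> mv \<V> (\<rho> ip) \<noteq> mv \<V> (\<rho> i)))"

definition inv :: "'v::linorder set set set \<Rightarrow> 'v set set \<Rightarrow> 'v set set" where
  "inv \<V> A = {\<sigma>\<in>A. \<exists>\<rho>. essential \<V> \<rho> \<and> range \<rho> \<subseteq> A \<and> \<sigma> \<in> range \<rho>}"

definition index_pair :: "'v::linorder set set set \<Rightarrow> 'v set set \<Rightarrow> 'v set set \<Rightarrow> 'v set set
    \<Rightarrow> 'v set set \<Rightarrow> bool" where
  "index_pair \<V> N S P E \<longleftrightarrow>
     is_closed E \<and> is_closed P \<and> E \<subseteq> P \<and> P \<subseteq> N \<and>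
     F_set \<V> E \<inter> N \<subseteq> E \<and>
     F_set \<V> P \<inter> N \<subseteq> P \<and>
     F_set \<V> (P - E) \<subseteq> N \<and>
     S = inv \<V> (P - E)"

definition index_pair_under :: "'v::linorder set set set \<Rightarrow> 'v set set \<Rightarrow> 'v set set
    \<Rightarrow> 'v set set \<Rightarrow> bool" where
  "index_pair_under \<V> N P E \<longleftrightarrow> index_pair \<V> N (inv \<V> (P - E)) P E"

end

theory Submission
  imports Defs
begin

text \<open>\<open>F\<close> maps a union of multivectors into itself and its mouth. So if the mouth already
  lies in \<open>P\<close>, adding the union to \<open>P\<close> keeps \<open>P\<close> closed and \<open>F\<close>-invariant in \<open>N\<close>;
  since the union misses \<open>E\<close> and lies in \<open>N\<close>, the conditions on \<open>E\<close> and on the exit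
  of \<open>P - E\<close> from \<open>N\<close> are inherited from \<open>(P, E)\<close>.\<close>

lemma mv_eqI:
  assumes "multivector_field K \<V>" "B \<in> \<V>" "\<sigma> \<in> B"
  shows "mv \<V> \<sigma> = B"
  unfolding mv_def
proof (rule the_equality)
  show "B \<in> \<V> \<and> \<sigma> \<in> B" using assms(2,3) ..
next
  fix A assume "A \<in> \<V> \<and> \<sigma> \<in> A"
  then show "A = B" using assms unfolding multivector_field_def by blast
qed

lemma cl_Un: "cl (A \<union> B) = cl A \<union> cl B"
  unfolding cl_def by blast

lemma subset_cl:
  assumes "\<And>\<sigma>. \<sigma> \<in> A \<Longrightarrow> \<sigma> \<noteq> {}"
  shows "A \<subseteq> cl A"
  using assms unfolding cl_def by blast

lemma F_set_Un: "F_set \<V> (A \<union> B) = F_set \<V> A \<union> F_set \<V> B"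
  unfolding F_set_def by blast

lemma is_closed_Un_mo_subset:
  assumes "is_closed P" "mo A \<subseteq> P" "\<And>\<sigma>. \<sigma> \<in> A \<Longrightarrow> \<sigma> \<noteq> {}"
  shows "is_closed (P \<union> A)"
  using assms subset_cl[of A] unfolding is_closed_def mo_def cl_Un by blast

lemma F_set_union_mv_subset:
  assumes "multivector_field K \<V>" "\<A> \<subseteq> \<V>"
  shows "F_set \<V> (union_mv \<A>) \<subseteq> union_mv \<A> \<union> mo (union_mv \<A>)"
proof
  fix x assume "x \<in> F_set \<V> (union_mv \<A>)"
  then obtain \<sigma> B where x: "x \<in> mv \<V> \<sigma> \<union> cl {\<sigma>}" and B: "B \<in> \<A>" "\<sigma> \<in> B"
    unfolding F_set_def F_def union_mv_def by blast
  have "mv \<V> \<sigma> = B"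
    using mv_eqI[OF assms(1)] assms(2) B by blast
  moreover have "cl {\<sigma>} \<subseteq> cl (union_mv \<A>)"
    using B unfolding cl_def union_mv_def by blast
  ultimately show "x \<in> union_mv \<A> \<union> mo (union_mv \<A>)"
    using x B unfolding mo_def union_mv_def by blast
qed

theorem proposition29:
  fixes K :: "'v::linorder set set" and \<V> :: "'v set set set"
    and N P E :: "'v set set" and \<A> :: "'v set set set"
  assumes "finite_simplicial_complex K"
    and "multivector_field K \<V>"
    and "N \<subseteq> K" and "is_closed N"
    and "index_pair_under \<V> N P E"
    and "\<A> \<subseteq> \<V>"
    and "union_mv \<A> \<subseteq> N"
    and "union_mv \<A> \<inter> E = {}"
    and "mo (union_mv \<A>) \<subseteq> P"
  shows "index_pair_under \<V> N (P \<union> union_mv \<A>) E"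
proof -
  let ?A = "union_mv \<A>"
  have ip: "is_closed P" "P \<subseteq> N" "F_set \<V> P \<inter> N \<subseteq> P" "F_set \<V> (P - E) \<subseteq> N"
    using assms(5) unfolding index_pair_under_def index_pair_def by auto
  have nonempty: "\<sigma> \<noteq> {}" if "\<sigma> \<in> ?A" for \<sigma>
    using assms(1,3,7) that unfolding finite_simplicial_complex_def simplicial_complex_def
    by blast
  have F_A: "F_set \<V> ?A \<subseteq> ?A \<union> P"
    using F_set_union_mv_subset[OF assms(2,6)] assms(9) by blast
  have diff: "P \<union> ?A - E = (P - E) \<union> ?A"
    using assms(8) by blast
  have "index_pair \<V> N (inv \<V> (P \<union> ?A - E)) (P \<union> ?A) E"
    unfolding index_pair_def
  proof (intro conjI)
    show "is_closed (P \<union> ?A)"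
      using is_closed_Un_mo_subset[OF ip(1) assms(9) nonempty] .
    show "F_set \<V> (P \<union> ?A) \<inter> N \<subseteq> P \<union> ?A"
      unfolding F_set_Un using ip(3) F_A by blast
    show "F_set \<V> (P \<union> ?A - E) \<subseteq> N"
      unfolding diff F_set_Un using ip(2,4) F_A assms(7) by blast
  qed (use assms(5,7) in \<open>auto simp: index_pair_under_def index_pair_def\<close>)
  then show ?thesis
    unfolding index_pair_under_def .
qed

end
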